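(* There is a constant $c$ such that, as $n\to\infty$, the fraction of Boolean $n\times n$ matrices $A$ for which the size of a smallest cancellation-free linear circuit computing $A$ is at most $c$ times the size of a smallest linear circuit computing $A$ tends to $1$. That is, for almost every matrix the cancellation ratio is bounded by a constant.
   Context: A linear circuit over $\mathbb{F}_2$ with inputs $x_1,\ldots,x_n$ is a directed acyclic graph whose in-degree-0 nodes are the inputs and whose other nodes (gates) have in-degree 2 and compute the XOR of their two children; $n$ nodes are designated as outputs $y_1,\ldots,y_n$, and the circuit computes $A$ if $\mathbf{y}=A\mathbf{x}$ for all $\mathbf{x}\in\mathbb{F}_2^n$. The size is the number of gates. The value vector $\kappa(u)\in\mathbb{F}_2^n$ of a node $u$ has $\kappa(u)_i=1$ iff $x_i$ occurs in the parity computed at $u$. A linear circuit is cancellation-free if whenever there is a directed path from a node $w$ to a node $u$, $\kappa(u)\geq\kappa(w)$ coordinatewise. The cancellation ratio of a matrix is the ratio between the size of a smallest cancellation-free linear circuit computing it and the size of a smallest linear circuit computing it. *)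

theory Defs
  imports Complex_Main
begin

text \<open>
Nodes 0..n-1 are the inputs x_0..x_{n-1};
node n+j (j < ngates C) is the j-th XOR gate, whose two (distinct) children are the
nodes lch C j and rch C j, both numbered below n+j (a topological numbering, so every
DAG of this kind is representable).  outp C i is the node designated as output y_i.
Value vectors kappa(u) are represented as subsets of {0..<n} (the support of the vector).
A Boolean n x n matrix is represented by the set of positions (i,k) of its 1-entries.
\<close>

record lcirc =
  ngates :: nat
  lch :: "nat \<Rightarrow> nat"
  rch :: "nat \<Rightarrow> nat"
  outp :: "nat \<Rightarrow> nat"

definition wf_circ :: "nat \<Rightarrow> lcirc \<Rightarrow> bool" where
  "wf_circ n C \<longleftrightarrow>
     (\<forall>j < ngates C. lch C j < n + j \<and> rch C j < n + j \<and> lch C j \<noteq> rch C j) \<and>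
     (\<forall>i < n. outp C i < n + ngates C)"

function kval :: "nat \<Rightarrow> lcirc \<Rightarrow> nat \<Rightarrow> nat set" where
  "kval n C v =
     (if v < n then {v}
      else if v < n + ngates C \<and> lch C (v - n) < v \<and> rch C (v - n) < v then
        (kval n C (lch C (v - n)) - kval n C (rch C (v - n))) \<union>
        (kval n C (rch C (v - n)) - kval n C (lch C (v - n)))
      else {})"
  by pat_completeness auto
termination by (relation "measure (\<lambda>(n, C, v). v)") auto

definition cedges :: "nat \<Rightarrow> lcirc \<Rightarrow> (nat \<times> nat) set" where
  "cedges n C = {(w, n + j) | w j. j < ngates C \<and> (w = lch C j \<or> w = rch C j)}"

definition cancellation_free :: "nat \<Rightarrow> lcirc \<Rightarrow> bool" where
  "cancellation_free n C \<longleftrightarrow>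
     (\<forall>w u. (w, u) \<in> (cedges n C)\<^sup>+ \<longrightarrow> kval n C w \<subseteq> kval n C u)"

definition computes :: "nat \<Rightarrow> lcirc \<Rightarrow> (nat \<times> nat) set \<Rightarrow> bool" where
  "computes n C A \<longleftrightarrow> wf_circ n C \<and>
     (\<forall>i < n. kval n C (outp C i) = {k. k < n \<and> (i, k) \<in> A})"

definition ratio_bounded :: "real \<Rightarrow> nat \<Rightarrow> (nat \<times> nat) set \<Rightarrow> bool" where
  "ratio_bounded c n A \<longleftrightarrow>
     (\<exists>C. computes n C A \<and> cancellation_free n C \<and>
        (\<forall>D. computes n D A \<longrightarrow> real (ngates C) \<le> c * real (ngates D)))"

end

theory Submission
  imports Defs "HOL-Library.FuncSet" "HOL-Library.Disjoint_Sets" "HOL-Library.Discrete_Functions"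
begin

text \<open>
Counting: a circuit with at most \<open>s\<close> gates is determined by its size and its wiring, so there
are at most \<open>(s + 1) (n + s)^(2s + n)\<close> of them, which for \<open>s = n\<^sup>2 / (8 (log n + 1))\<close> is at most \<open>2^(n\<^sup>2 - n)\<close>.
So all but a \<open>2^-n\<close> fraction of the matrices need more than \<open>s\<close> gates.
Conversely, Lupanov's construction gives a cancellation-free circuit with \<open>O(n\<^sup>2 / log n)\<close> gates
for every matrix without zero rows: cut the columns into blocks of \<open>log n\<close> consecutive indices,
build every nonempty subset of every block, and then each row as the disjoint union of its
parts in the blocks. Every gate of this circuit XORs vectors of disjoint supports, so value
vectors only grow along paths. Matrices with a zero row are an \<open>n 2^-n\<close> fraction.
\<close>

declare kval.simps[simp del]

lemma kval_input: "v < n \<Longrightarrow> kval n C v = {v}"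
  by (subst kval.simps) simp

lemma kval_gate:
  assumes "j < ngates C" "lch C j < n + j" "rch C j < n + j"
  shows "kval n C (n + j) =
    (kval n C (lch C j) - kval n C (rch C j)) \<union> (kval n C (rch C j) - kval n C (lch C j))"
  using assms by (subst kval.simps) simp

lemma kval_prefix_cong:
  assumes "m \<le> ngates C" "m \<le> ngates C'" "\<forall>j<m. lch C j = lch C' j \<and> rch C j = rch C' j"
  shows "v < n + m \<Longrightarrow> kval n C v = kval n C' v"
proof (induction v rule: less_induct)
  case (less v)
  show ?case
  proof (cases "v < n")
    case False
    then have "lch C (v - n) = lch C' (v - n)" "rch C (v - n) = rch C' (v - n)"
      "v < n + ngates C" "v < n + ngates C'"
      using assms less.prems by auto
    then show ?thesis using less by (subst (1 2) kval.simps) auto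
  qed (subst (1 2) kval.simps; simp)
qed

section \<open>Circuits of disjoint unions\<close>

definition union_circ :: "nat \<Rightarrow> lcirc \<Rightarrow> bool" where
  "union_circ n C \<longleftrightarrow> (\<forall>j<ngates C. lch C j < n + j \<and> rch C j < n + j \<and> lch C j \<noteq> rch C j \<and>
      kval n C (lch C j) \<inter> kval n C (rch C j) = {})"

definition union_realizable :: "nat \<Rightarrow> nat set set \<Rightarrow> nat \<Rightarrow> bool" where
  "union_realizable n F s \<longleftrightarrow>
     (\<exists>C. ngates C \<le> s \<and> union_circ n C \<and> (\<forall>X\<in>F. \<exists>v<n + ngates C. kval n C v = X))"

lemma union_circ_cancellation_free:
  assumes "union_circ n C"
  shows "cancellation_free n C"
proof -
  have edge: "kval n C w \<subseteq> kval n C u" if wu: "(w, u) \<in> cedges n C" for w u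
  proof -
    obtain j where j: "j < ngates C" "u = n + j" "w = lch C j \<or> w = rch C j"
      using wu unfolding cedges_def by blast
    then have "lch C j < n + j" "rch C j < n + j" "kval n C (lch C j) \<inter> kval n C (rch C j) = {}"
      using assms unfolding union_circ_def by auto
    then show ?thesis using kval_gate[of j C n] j by auto
  qed
  show ?thesis unfolding cancellation_free_def
  proof (intro allI impI)
    fix w u assume "(w, u) \<in> (cedges n C)\<^sup>+"
    then show "kval n C w \<subseteq> kval n C u"
      by (induction rule: trancl_induct) (use edge in blast)+
  qed
qed

lemma union_realizable_mono:
  "union_realizable n F s \<Longrightarrow> F' \<subseteq> F \<Longrightarrow> s \<le> s' \<Longrightarrow> union_realizable n F' s'"
  unfolding union_realizable_def by (meson order_trans subsetD)

lemma union_realizable_singletons: "union_realizable n {{i} | i. i < n} 0"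
  unfolding union_realizable_def union_circ_def
  by (rule exI[of _ "\<lparr>ngates = 0, lch = \<lambda>_. 0, rch = \<lambda>_. 0, outp = \<lambda>_. 0\<rparr>"]) (auto simp: kval_input)

lemma union_realizable_insert_Un:
  assumes "union_realizable n F s" "a \<in> F" "b \<in> F" "a \<inter> b = {}" "a \<noteq> {}"
  shows "union_realizable n (insert (a \<union> b) F) (Suc s)"
proof -
  obtain C where C: "ngates C \<le> s" "union_circ n C" "\<forall>X\<in>F. \<exists>v<n + ngates C. kval n C v = X"
    using assms(1) unfolding union_realizable_def by blast
  obtain va vb where v: "va < n + ngates C" "kval n C va = a" "vb < n + ngates C" "kval n C vb = b"
    using C(3) assms(2,3) by meson
  define g where "g = ngates C"
  define C' where "C' = C\<lparr>ngates := Suc g, lch := (lch C)(g := va), rch := (rch C)(g := vb)\<rparr>"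
  have old: "kval n C' v = kval n C v" if "v < n + g" for v
    by (rule kval_prefix_cong[of g]) (use that in \<open>auto simp: C'_def g_def\<close>)
  have "union_circ n C'"
    unfolding union_circ_def
  proof (intro allI impI)
    fix j assume "j < ngates C'"
    then consider "j < g" | "j = g" by (auto simp: C'_def less_Suc_eq)
    then show "lch C' j < n + j \<and> rch C' j < n + j \<and> lch C' j \<noteq> rch C' j \<and>
        kval n C' (lch C' j) \<inter> kval n C' (rch C' j) = {}"
    proof cases
      case 1
      then have "lch C' j = lch C j" "rch C' j = rch C j" by (simp_all add: C'_def)
      moreover have children: "lch C j < n + j" "rch C j < n + j" "lch C j \<noteq> rch C j"
          "kval n C (lch C j) \<inter> kval n C (rch C j) = {}"
        using 1 C(2) by (auto simp: union_circ_def g_def)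
      moreover have "kval n C' (lch C j) = kval n C (lch C j)" "kval n C' (rch C j) = kval n C (rch C j)"
        using 1 children(1,2) by (simp_all add: old)
      ultimately show ?thesis by simp
    next
      case 2
      then show ?thesis using v old assms(4,5) by (auto simp: C'_def g_def)
    qed
  qed
  moreover have "\<forall>X\<in>insert (a \<union> b) F. \<exists>v<n + ngates C'. kval n C' v = X"
  proof
    fix X assume "X \<in> insert (a \<union> b) F"
    moreover have "kval n C' (n + g) = a \<union> b"
      using kval_gate[of g C' n] v old assms(4) by (auto simp: C'_def g_def)
    moreover have "\<exists>v<n + g. kval n C' v = X" if "X \<in> F"
      using C(3) that old by (fastforce simp: g_def)
    ultimately show "\<exists>v<n + ngates C'. kval n C' v = X"
      by (auto simp: C'_def) (metis less_Suc_eq add_Suc_right)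
  qed
  moreover have "ngates C' \<le> Suc s" using C(1) by (simp add: C'_def g_def)
  ultimately show ?thesis unfolding union_realizable_def by blast
qed

lemma union_realizable_add_disjoint_unions:
  assumes "finite T" "union_realizable n F s"
    "\<forall>t\<in>T. \<exists>a\<in>F. \<exists>b\<in>F. a \<inter> b = {} \<and> a \<noteq> {} \<and> t = a \<union> b"
  shows "union_realizable n (F \<union> T) (s + card T)"
  using assms(1,3)
proof (induction T rule: finite_induct)
  case empty
  then show ?case using assms(2) by simp
next
  case (insert t T)
  then obtain a b where ab: "a \<in> F" "b \<in> F" "a \<inter> b = {}" "a \<noteq> {}" "t = a \<union> b" by auto
  have "union_realizable n (insert (a \<union> b) (F \<union> T)) (Suc (s + card T))"
    using insert ab by (intro union_realizable_insert_Un) auto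
  then show ?case using insert.hyps ab by simp
qed

lemma union_realizable_Pow:
  assumes "finite B" "union_realizable n F s" "\<forall>x\<in>B. {x} \<in> F"
  shows "union_realizable n (F \<union> (Pow B - {{}})) (s + 2 ^ card B)"
  using assms
proof (induction B rule: finite_induct)
  case empty
  then show ?case using union_realizable_mono by fastforce
next
  case (insert x B)
  define F' where "F' = F \<union> (Pow B - {{}})"
  define T where "T = insert x ` (Pow B - {{}})"
  have IH: "union_realizable n F' (s + 2 ^ card B)"
    unfolding F'_def using insert by simp
  have "card T \<le> card (Pow B)"
    unfolding T_def using insert.hyps by (intro card_image_le[THEN order_trans] card_mono) auto
  then have card_T: "card T \<le> 2 ^ card B" using insert.hyps by (simp add: card_Pow)
  have "\<forall>t\<in>T. \<exists>a\<in>F'. \<exists>b\<in>F'. a \<inter> b = {} \<and> a \<noteq> {} \<and> t = a \<union> b"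
  proof
    fix t assume "t \<in> T"
    then obtain S where "S \<subseteq> B" "S \<noteq> {}" "t = insert x S" by (auto simp: T_def)
    then show "\<exists>a\<in>F'. \<exists>b\<in>F'. a \<inter> b = {} \<and> a \<noteq> {} \<and> t = a \<union> b"
      using insert by (intro bexI[of _ "{x}"] bexI[of _ S]) (auto simp: F'_def)
  qed
  then have "union_realizable n (F' \<union> T) (s + 2 ^ card B + card T)"
    using insert.hyps by (intro union_realizable_add_disjoint_unions[OF _ IH]) (auto simp: T_def)
  moreover have "F \<union> (Pow (insert x B) - {{}}) \<subseteq> F' \<union> T"
  proof
    fix S assume "S \<in> F \<union> (Pow (insert x B) - {{}})"
    then consider "S \<in> F" | "S \<subseteq> B" "S \<noteq> {}" | "S = {x}"
      | "S = insert x (S - {x})" "S - {x} \<subseteq> B" "S - {x} \<noteq> {}"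
      by blast
    then show "S \<in> F' \<union> T"
    proof cases
      case 4
      then show ?thesis unfolding T_def by blast
    qed (use insert.prems in \<open>auto simp: F'_def\<close>)
  qed
  ultimately show ?case
    using card_T insert.hyps by (elim union_realizable_mono) auto
qed

lemma union_realizable_insert_Union:
  assumes "finite P" "P \<noteq> {}" "union_realizable n F s" "P \<subseteq> F" "disjoint P" "{} \<notin> P"
  shows "union_realizable n (insert (\<Union>P) F) (s + card P - 1)"
  using assms(1,2,4-6)
proof (induction P rule: finite_ne_induct)
  case (singleton p)
  then show ?case using assms(3) by (simp add: insert_absorb)
next
  case (insert p P)
  have "P \<subseteq> F" "disjoint P" "{} \<notin> P" using insert.prems by (auto simp: pairwise_insert)
  then have IH: "union_realizable n (insert (\<Union>P) F) (s + card P - 1)"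
    by (rule insert.IH)
  have "p \<inter> \<Union>P = {}"
    using insert by (auto simp: pairwise_insert disjnt_def)
  then have "union_realizable n (insert (p \<union> \<Union>P) (insert (\<Union>P) F)) (Suc (s + card P - 1))"
    using insert by (intro union_realizable_insert_Un[OF IH]) auto
  moreover have "card P \<ge> 1" using insert.hyps by (simp add: Suc_leI card_gt_0_iff)
  ultimately show ?case using insert.hyps by (elim union_realizable_mono) auto
qed

lemma union_realizable_computes:
  assumes "union_realizable n F s" "\<forall>i<n. R i \<in> F"
  shows "\<exists>C. ngates C \<le> s \<and> cancellation_free n C \<and> wf_circ n C \<and>
             (\<forall>i<n. kval n C (outp C i) = R i)"
proof -
  obtain C where C: "ngates C \<le> s" "union_circ n C" "\<forall>X\<in>F. \<exists>v<n + ngates C. kval n C v = X"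
    using assms(1) unfolding union_realizable_def by blast
  define out where "out i = (SOME v. v < n + ngates C \<and> kval n C v = R i)" for i
  have out: "out i < n + ngates C \<and> kval n C (out i) = R i" if "i < n" for i
    unfolding out_def by (rule someI_ex) (use C(3) assms(2) that in blast)
  define C' where "C' = C\<lparr>outp := out\<rparr>"
  have same: "kval n C' v = kval n C v" for v
  proof (cases "v < n + ngates C")
    case True
    then show ?thesis by (intro kval_prefix_cong[of "ngates C"]) (auto simp: C'_def)
  next
    case False
    then show ?thesis by (subst (1 2) kval.simps) (simp add: C'_def)
  qed
  have "union_circ n C'" using C(2) unfolding union_circ_def same by (simp add: C'_def)
  moreover have "wf_circ n C'"
    using C(2) out unfolding wf_circ_def union_circ_def by (simp add: C'_def)
  ultimately show ?thesis
    using C(1) out same union_circ_cancellation_free by (intro exI[of _ C']) (auto simp: C'_def)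
qed

section \<open>Lupanov's cancellation-free circuit\<close>

definition col_block :: "nat \<Rightarrow> nat \<Rightarrow> nat \<Rightarrow> nat set" where
  "col_block n k t = {i. i < n \<and> i div k = t}"

lemma card_col_block_le:
  assumes "k > 0"
  shows "card (col_block n k t) \<le> k"
proof -
  have "col_block n k t \<subseteq> {t * k..<t * k + k}"
  proof
    fix i assume "i \<in> col_block n k t"
    then have "i div k = t" by (simp add: col_block_def)
    moreover have "i div k * k \<le> i" "i < i div k * k + k"
      using div_times_less_eq_dividend[of i k] mod_less_divisor[OF assms, of i]
        div_mult_mod_eq[of i k] by linarith+
    ultimately show "i \<in> {t * k..<t * k + k}" by simp
  qed
  then show ?thesis using card_mono[of "{t * k..<t * k + k}"] by fastforce
qed

definition block_subsets :: "nat \<Rightarrow> nat \<Rightarrow> nat \<Rightarrow> nat set set" where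
  "block_subsets n k m = {{i} | i. i < n} \<union> (\<Union>t<m. Pow (col_block n k t) - {{}})"

lemma union_realizable_block_subsets:
  assumes "k > 0"
  shows "union_realizable n (block_subsets n k m) (m * 2 ^ k)"
proof (induction m)
  case 0
  then show ?case using union_realizable_singletons by (simp add: block_subsets_def)
next
  case (Suc m)
  have "union_realizable n (block_subsets n k m \<union> (Pow (col_block n k m) - {{}}))
      (m * 2 ^ k + 2 ^ card (col_block n k m))"
    by (rule union_realizable_Pow[OF _ Suc.IH])
      (auto simp: block_subsets_def col_block_def)
  moreover have "2 ^ card (col_block n k m) \<le> (2::nat) ^ k"
    using card_col_block_le[OF assms] by (simp add: power_increasing)
  ultimately show ?case
    by (elim union_realizable_mono) (auto simp: block_subsets_def lessThan_Suc)
qed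

lemma block_parts_decompose:
  assumes "k > 0" "R \<subseteq> {..<n}"
  defines "P \<equiv> (\<lambda>t. R \<inter> col_block n k t) ` {..n div k} - {{}}"
  shows "\<Union>P = R" "P \<subseteq> block_subsets n k (n div k + 1)" "disjoint P" "card P \<le> n div k + 1"
proof -
  have "j \<in> R \<inter> col_block n k (j div k)" "R \<inter> col_block n k (j div k) \<in> P" if "j \<in> R" for j
    using that assms(2) by (auto simp: P_def col_block_def div_le_mono)
  then have "R \<subseteq> \<Union>P" by blast
  then show "\<Union>P = R" by (auto simp: P_def)
  show "P \<subseteq> block_subsets n k (n div k + 1)"
  proof
    fix p assume "p \<in> P"
    then obtain t where "t < n div k + 1" "p = R \<inter> col_block n k t" "p \<noteq> {}" by (auto simp: P_def less_Suc_eq_le)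
    then show "p \<in> block_subsets n k (n div k + 1)"
      unfolding block_subsets_def by blast
  qed
  show "disjoint P"
    by (auto simp: P_def disjoint_def col_block_def)
  have "card P \<le> card ((\<lambda>t. R \<inter> col_block n k t) ` {..n div k})"
    unfolding P_def by (rule card_mono) auto
  also have "\<dots> \<le> n div k + 1" using card_image_le[of "{..n div k}"] by simp
  finally show "card P \<le> n div k + 1" .
qed

lemma cancellation_free_circuit_le:
  assumes "k > 0" and no_zero_row: "\<forall>i<n. \<exists>j<n. (i, j) \<in> A"
  shows "\<exists>C. computes n C A \<and> cancellation_free n C \<and>
           ngates C \<le> (n div k + 1) * 2 ^ k + n * (n div k + 1)"
proof -
  define b where "b = n div k + 1"
  define R where "R i = {j. j < n \<and> (i, j) \<in> A}" for i
  have rows: "union_realizable n (block_subsets n k b \<union> R ` {..<m}) (b * 2 ^ k + m * b)"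
    if "m \<le> n" for m
    using that
  proof (induction m)
    case 0
    then show ?case using union_realizable_block_subsets[OF assms(1)] by simp
  next
    case (Suc m)
    define P where "P = (\<lambda>t. R m \<inter> col_block n k t) ` {..n div k} - {{}}"
    have P: "\<Union>P = R m" "P \<subseteq> block_subsets n k b" "disjoint P" "card P \<le> b"
      using block_parts_decompose[OF assms(1), of "R m" n] unfolding P_def b_def R_def by auto
    have "R m \<noteq> {}" using no_zero_row Suc.prems by (auto simp: R_def)
    then have "P \<noteq> {}" using P(1) by auto
    then have "union_realizable n (insert (\<Union>P) (block_subsets n k b \<union> R ` {..<m}))
        (b * 2 ^ k + m * b + card P - 1)"
      using Suc P by (intro union_realizable_insert_Union) (auto simp: P_def)
    then show ?case
      using P(1,4) by (elim union_realizable_mono) (auto simp: lessThan_Suc)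
  qed
  obtain C where C: "ngates C \<le> b * 2 ^ k + n * b" "cancellation_free n C" "wf_circ n C"
      "\<forall>i<n. kval n C (outp C i) = R i"
    using union_realizable_computes[OF rows] by blast
  then have "computes n C A" by (simp add: computes_def R_def)
  then show ?thesis using C(1,2) by (auto simp: b_def)
qed

section \<open>Counting matrices with small circuits\<close>

definition circ_matrix :: "nat \<Rightarrow> lcirc \<Rightarrow> (nat \<times> nat) set" where
  "circ_matrix n D = {(i, k). i < n \<and> k < n \<and> k \<in> kval n D (outp D i)}"

lemma card_small_circuit_matrices_le:
  "card {A \<in> Pow ({..<n} \<times> {..<n}). \<exists>D. computes n D A \<and> ngates D \<le> s}
     \<le> (s + 1) * (n + s) ^ s * (n + s) ^ s * (n + s) ^ n"
proof -
  define wires where "wires m = PiE {..<m} (\<lambda>_. {..<n + s})" for m :: nat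
  define X where "X = {..s} \<times> wires s \<times> wires s \<times> wires n"
  define f where "f = (\<lambda>(g, l, r, out). circ_matrix n \<lparr>ngates = g, lch = l, rch = r, outp = out\<rparr>)"
  have "{A \<in> Pow ({..<n} \<times> {..<n}). \<exists>D. computes n D A \<and> ngates D \<le> s} \<subseteq> f ` X"
  proof safe
    fix A D assume A: "A \<subseteq> {..<n} \<times> {..<n}" "computes n D A" "ngates D \<le> s"
    define g where "g = ngates D"
    \<comment> \<open>\<open>D\<close> with its wiring made extensional, so that its description lies in \<open>X\<close>\<close>
    define l where "l = restrict (\<lambda>j. if j < g then lch D j else 0) {..<s}"
    define r where "r = restrict (\<lambda>j. if j < g then rch D j else 0) {..<s}"
    define D' where "D' = \<lparr>ngates = g, lch = l, rch = r, outp = restrict (outp D) {..<n}\<rparr>"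
    have wf: "wf_circ n D" using A(2) by (simp add: computes_def)
    then have inX: "(g, l, r, restrict (outp D) {..<n}) \<in> X"
      using A(3) by (fastforce simp: X_def wires_def l_def r_def g_def wf_circ_def)
    have outputs: "kval n D' (outp D' i) = kval n D (outp D i)" if "i < n" for i
    proof -
      have "outp D' i = outp D i" "outp D i < n + g"
        using wf that by (auto simp: D'_def wf_circ_def g_def)
      then show ?thesis
        using kval_prefix_cong[of g D' D "outp D i" n] A(3) by (simp add: D'_def l_def r_def g_def)
    qed
    have "f (g, l, r, restrict (outp D) {..<n}) = circ_matrix n D'" by (simp add: f_def D'_def)
    also have "\<dots> = circ_matrix n D" unfolding circ_matrix_def using outputs by auto
    also have "\<dots> = A" using A(1,2) by (auto simp: computes_def circ_matrix_def)
    finally show "A \<in> f ` X" using inX by blast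
  qed
  moreover have "finite X" by (simp add: X_def wires_def finite_PiE)
  ultimately have "card {A \<in> Pow ({..<n} \<times> {..<n}). \<exists>D. computes n D A \<and> ngates D \<le> s} \<le> card X"
    by (meson card_image_le card_mono finite_imageI order_trans)
  also have "card X = (s + 1) * (n + s) ^ s * (n + s) ^ s * (n + s) ^ n"
    by (simp add: X_def wires_def card_cartesian_product card_PiE algebra_simps)
  finally show ?thesis .
qed

lemma card_zero_row_matrices_le:
  "card {A \<in> Pow ({..<n} \<times> {..<n}). \<exists>i<n. \<forall>j<n. (i, j) \<notin> A} \<le> n * 2 ^ (n * n - n)"
proof -
  define sq where "sq = {..<n} \<times> {..<(n::nat)}"
  have card_row_zero: "card (Pow (sq - {i} \<times> {..<n})) = 2 ^ (n * n - n)" if "i < n" for i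
  proof -
    have "card (sq - {i} \<times> {..<n}) = card sq - card ({i} \<times> {..<n})"
      by (rule card_Diff_subset) (use that in \<open>auto simp: sq_def\<close>)
    then show ?thesis by (simp add: card_Pow sq_def card_cartesian_product)
  qed
  have "card {A \<in> Pow sq. \<exists>i<n. \<forall>j<n. (i, j) \<notin> A} \<le> card (\<Union>i<n. Pow (sq - {i} \<times> {..<n}))"
    by (rule card_mono) (auto simp: sq_def)
  also have "\<dots> \<le> (\<Sum>i<n. card (Pow (sq - {i} \<times> {..<n})))" by (rule card_UN_le) simp
  also have "\<dots> = n * 2 ^ (n * n - n)" using card_row_zero by simp
  finally show ?thesis by (simp add: sq_def)
qed

section \<open>The choice of the threshold\<close>

lemma floor_log_bounds:
  assumes "n \<ge> 64"
  shows "floor_log n \<ge> 6" "2 ^ floor_log n \<le> n" "8 * (floor_log n + 1) \<le> n"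
    "n < 2 * 2 ^ floor_log n"
proof -
  have "floor_log (64::nat) = 6" using floor_log_power[of 6] by simp
  then show L6: "floor_log n \<ge> 6" using floor_log_le_iff[OF assms] by simp
  show pow: "2 ^ floor_log n \<le> n" by (rule floor_log_exp2_le) (use assms in simp)
  have "8 * (L + 1) \<le> (2::nat) ^ L" if "L \<ge> 6" for L
    using that by (induction L rule: dec_induct) simp_all
  then show "8 * (floor_log n + 1) \<le> n" using L6 pow by (meson order_trans)
  show "n < 2 * 2 ^ floor_log n" by (rule floor_log_exp2_gt)
qed

lemma small_circuit_count_le:
  assumes "n \<ge> 64" "L = floor_log n" "s = n * n div (8 * (L + 1))"
  shows "(s + 1) * (n + s) ^ s * (n + s) ^ s * (n + s) ^ n \<le> 2 ^ (n * n - n)"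
proof -
  note L = floor_log_bounds[OF assms(1), folded assms(2)]
  define M where "M = 2 * L + 2"
  have s8: "s * (8 * (L + 1)) \<le> n * n" unfolding assms(3) by (rule div_times_less_eq_dividend)
  have "n * n < (2 * 2 ^ L) * (2 * 2 ^ L)" using mult_strict_mono[OF L(4) L(4)] by simp
  also have "\<dots> = 2 ^ M" by (simp add: M_def power_add power_mult_distrib flip: power_mult power2_eq_square)
  finally have "n * n < 2 ^ M" .
  moreover have "64 * n \<le> n * n" using mult_le_mono1[OF assms(1), of n] by simp
  moreover have "8 * s \<le> n * n" using s8 by (simp add: algebra_simps)
  ultimately have "n + s \<le> 2 ^ M" "s + 1 \<le> 2 ^ M" by linarith+
  then have "(s + 1) * (n + s) ^ s * (n + s) ^ s * (n + s) ^ n \<le> 2 ^ M * (2 ^ M) ^ s * (2 ^ M) ^ s * (2 ^ M) ^ n"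
    by (intro mult_mono power_mono) simp_all
  also have "\<dots> = 2 ^ (M * (1 + s + s + n))" by (simp add: power_add power_mult algebra_simps)
  also have "\<dots> \<le> 2 ^ (n * n - n)"
  proof (rule power_increasing)
    have "8 * ((L + 1) * n) \<le> n * n" using L(3) by (metis mult.assoc mult_le_mono1)
    moreover have "10 * n \<le> 2 * (n * n)" using assms(1) by (simp add: mult_le_mono)
    moreover have "M * (1 + s + s + n) = 2 * (L + 1) + 4 * ((L + 1) * s) + 2 * ((L + 1) * n)"
      by (simp add: M_def algebra_simps)
    ultimately show "M * (1 + s + s + n) \<le> n * n - n" using s8 L(3) by (simp add: algebra_simps)
  qed simp
  finally show ?thesis .
qed

lemma lupanov_size_le:
  assumes "n \<ge> 64" "L = floor_log n" "s = n * n div (8 * (L + 1))"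
  shows "(n div L + 1) * 2 ^ L + n * (n div L + 1) \<le> 48 * (s + 1)"
proof -
  note L = floor_log_bounds[OF assms(1), folded assms(2)]
  define q where "q = n div L"
  have "q * L \<le> n" "q \<le> n" using div_times_less_eq_dividend[of n L] by (simp_all add: q_def)
  then have blocks: "(L + 1) * (q + 1) \<le> 3 * n" using L(3) by (simp add: algebra_simps)
  have "8 * (L + 1) * (2 * n * (q + 1)) = 16 * n * ((L + 1) * (q + 1))" by (simp add: algebra_simps)
  also have "\<dots> \<le> 16 * n * (3 * n)" using blocks by (rule mult_le_mono2)
  also have "\<dots> = 48 * (n * n)" by simp
  also have "\<dots> < 8 * (L + 1) * (48 * (s + 1))"
    using dividend_less_div_times[of "8 * (L + 1)" "n * n"] by (simp add: assms(3) algebra_simps)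
  finally have "2 * n * (q + 1) < 48 * (s + 1)" by (simp only: mult_less_cancel1)
  moreover have "(q + 1) * 2 ^ L \<le> (q + 1) * n" using L(2) by (rule mult_le_mono2)
  ultimately show ?thesis by (simp add: q_def algebra_simps)
qed

lemma ratio_bounded_if_no_small_circuit:
  assumes "n \<ge> 64" "L = floor_log n" "s = n * n div (8 * (L + 1))"
    and "\<forall>i<n. \<exists>j<n. (i, j) \<in> A" "\<nexists>D. computes n D A \<and> ngates D \<le> s"
  shows "ratio_bounded 48 n A"
proof -
  have "L > 0" using floor_log_bounds(1)[OF assms(1)] assms(2) by simp
  then obtain C where C: "computes n C A" "cancellation_free n C"
      "ngates C \<le> (n div L + 1) * 2 ^ L + n * (n div L + 1)"
    using cancellation_free_circuit_le assms(4) by blast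
  have "ngates C \<le> 48 * ngates D" if "computes n D A" for D
    using C(3) lupanov_size_le[OF assms(1-3)] assms(5) that by fastforce
  then have "real (ngates C) \<le> 48 * real (ngates D)" if "computes n D A" for D
    using that of_nat_mono by fastforce
  then show ?thesis unfolding ratio_bounded_def using C(1,2) by blast
qed

lemma ratio_bounded_fraction_ge:
  assumes "n \<ge> 64"
  shows "1 - (real n + 1) / 2 ^ n
    \<le> real (card {A \<in> Pow ({..<n} \<times> {..<n}). ratio_bounded 48 n A}) / 2 ^ (n * n)"
proof -
  define s where "s = n * n div (8 * (floor_log n + 1))"
  define P where "P = Pow ({..<n} \<times> {..<(n::nat)})"
  define good where "good = {A \<in> P. ratio_bounded 48 n A}"
  define zero_row where "zero_row = {A \<in> P. \<exists>i<n. \<forall>j<n. (i, j) \<notin> A}"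
  define cheap where "cheap = {A \<in> P. \<exists>D. computes n D A \<and> ngates D \<le> s}"
  have "P \<subseteq> good \<union> zero_row \<union> cheap"
    using ratio_bounded_if_no_small_circuit[OF assms refl s_def]
    by (auto simp: good_def zero_row_def cheap_def)
  then have "card P \<le> card (good \<union> zero_row \<union> cheap)"
    by (intro card_mono) (auto simp: P_def good_def zero_row_def cheap_def)
  also have "\<dots> \<le> card good + card zero_row + card cheap"
    by (meson card_Un_le le_trans add_le_mono1)
  also have "card zero_row \<le> n * 2 ^ (n * n - n)"
    unfolding zero_row_def P_def by (rule card_zero_row_matrices_le)
  also have "card cheap \<le> 2 ^ (n * n - n)"
    using card_small_circuit_matrices_le[of n s] small_circuit_count_le[OF assms refl s_def]
    unfolding cheap_def P_def by linarith
  finally have "2 ^ (n * n) \<le> card good + (n + 1) * 2 ^ (n * n - n)"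
    by (simp add: P_def card_Pow card_cartesian_product)
  then have "real (2 ^ (n * n)) \<le> real (card good + (n + 1) * 2 ^ (n * n - n))"
    by (simp only: of_nat_le_iff)
  then have bound: "(2::real) ^ (n * n) \<le> real (card good) + (real n + 1) * 2 ^ (n * n - n)"
    by (simp add: algebra_simps)
  have "(2::real) ^ (n * n) = 2 ^ (n * n - n) * 2 ^ n"
    using assms by (simp flip: power_add)
  then have "1 - (real n + 1) / 2 ^ n = (2 ^ (n * n) - (real n + 1) * 2 ^ (n * n - n)) / 2 ^ (n * n)"
    by (simp add: field_simps)
  also have "\<dots> \<le> real (card good) / 2 ^ (n * n)"
    using bound by (intro divide_right_mono) simp_all
  finally show ?thesis by (simp add: good_def P_def)
qed

lemma ratio_bounded_fraction_le_1:
  "real (card {A \<in> Pow ({..<n} \<times> {..<n}). ratio_bounded c n A}) / 2 ^ (n * n) \<le> 1"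
proof -
  have "card {A \<in> Pow ({..<n} \<times> {..<(n::nat)}). ratio_bounded c n A} \<le> card (Pow ({..<n} \<times> {..<n}))"
    by (rule card_mono) auto
  then have "real (card {A \<in> Pow ({..<n} \<times> {..<(n::nat)}). ratio_bounded c n A}) \<le> 2 ^ (n * n)"
    by (simp add: card_Pow card_cartesian_product flip: of_nat_le_iff)
  then show ?thesis by simp
qed

theorem theorem3:
  shows "\<exists>c::real. (\<lambda>n. real (card {A \<in> Pow ({..<n} \<times> {..<n}). ratio_bounded c n A})
                          / 2 ^ (n * n)) \<longlonglongrightarrow> 1"
proof (rule exI[of _ 48], rule tendsto_sandwich[OF _ _ _ tendsto_const])
  have "(\<lambda>n. real n / 2 ^ n + 1 / (2::real) ^ n) \<longlonglongrightarrow> 0 + 0"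
    by (intro tendsto_add lim_n_over_pown LIMSEQ_divide_realpow_zero) simp_all
  then have "(\<lambda>n. 1 - (real n + 1) / (2::real) ^ n) \<longlonglongrightarrow> 1 - 0"
    by (intro tendsto_diff tendsto_const) (simp add: add_divide_distrib)
  then show "(\<lambda>n. 1 - (real n + 1) / (2::real) ^ n) \<longlonglongrightarrow> 1" by simp
  show "\<forall>\<^sub>F n in sequentially. 1 - (real n + 1) / 2 ^ n
      \<le> real (card {A \<in> Pow ({..<n} \<times> {..<n}). ratio_bounded 48 n A}) / 2 ^ (n * n)"
    unfolding eventually_sequentially using ratio_bounded_fraction_ge by blast
  show "\<forall>\<^sub>F n in sequentially.
      real (card {A \<in> Pow ({..<n} \<times> {..<n}). ratio_bounded 48 n A}) / 2 ^ (n * n) \<le> 1"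
    using ratio_bounded_fraction_le_1 by simp
qed

end
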